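(* For a restless bandit as in the context, every stationary policy $u$, every $S\subseteq N^{\{0,1\}}$ and every initial state $i\in N$, $$b^u_i+\sum_{j\in S}w^S_j\,x^{0,u}_{ij}=b^S_i+\sum_{j\in N^{\{0,1\}}\setminus S}w^S_j\,x^{1,u}_{ij}.$$
   Context: Restless bandit: finite state space $N=N^{\{0,1\}}\cup N^{\{1\}}$ (disjoint); actions $a\in\{0,1\}$; transition probabilities $p^a_{ij}$ with $p^1_{ij}=p^0_{ij}$ for $i\in N^{\{1\}}$; discount factor $\beta\in(0,1)$; activity weights $\theta^1_j>0$. Stationary policies $u:N\to[0,1]$ (probability of the active action) with $u(i)=1$ on $N^{\{1\}}$. With $X(t),a(t)$ state and action at period $t$: $b^u_i=E^u_i[\sum_{t\ge0}\theta^1_{X(t)}a(t)\beta^t]$, $x^{a,u}_{ij}=E^u_i[\sum_{t\ge0}1\{X(t)=j,a(t)=a\}\beta^t]$. For $S\subseteq N^{\{0,1\}}$ the $S$-active policy is active on $S\cup N^{\{1\}}$ and passive elsewhere; $b^S_i$ its activity measure. Marginal workloads: $w^S_i=\theta^1_i1\{i\in N^{\{0,1\}}\}+\beta\sum_{j\in N}(p^1_{ij}-p^0_{ij})b^S_j$. *)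

theory Defs
  imports Complex_Main
begin

text \<open>State space N (finite), transition kernels p0 (passive) and p1 (active).
A stationary policy u gives the probability u j of choosing the active action in state j.\<close>

fun sdist :: "'s set \<Rightarrow> ('s \<Rightarrow> 's \<Rightarrow> real) \<Rightarrow> ('s \<Rightarrow> 's \<Rightarrow> real) \<Rightarrow> ('s \<Rightarrow> real)
              \<Rightarrow> 's \<Rightarrow> nat \<Rightarrow> 's \<Rightarrow> real" where
  "sdist N p0 p1 u i 0 j = (if j = i then 1 else 0)"
| "sdist N p0 p1 u i (Suc t) j =
     (\<Sum>k\<in>N. sdist N p0 p1 u i t k * (u k * p1 k j + (1 - u k) * p0 k j))"

definition sa_prob :: "'s set \<Rightarrow> ('s \<Rightarrow> 's \<Rightarrow> real) \<Rightarrow> ('s \<Rightarrow> 's \<Rightarrow> real) \<Rightarrow> ('s \<Rightarrow> real)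
              \<Rightarrow> 's \<Rightarrow> nat \<Rightarrow> 's \<Rightarrow> nat \<Rightarrow> real" where
  "sa_prob N p0 p1 u i t j a =
     sdist N p0 p1 u i t j * (if a = 1 then u j else 1 - u j)"

text \<open>x^{a,u}_{ij} = E^u_i[sum_t 1{X(t)=j, a(t)=a} beta^t].\<close>
definition occ :: "'s set \<Rightarrow> ('s \<Rightarrow> 's \<Rightarrow> real) \<Rightarrow> ('s \<Rightarrow> 's \<Rightarrow> real) \<Rightarrow> real
              \<Rightarrow> ('s \<Rightarrow> real) \<Rightarrow> nat \<Rightarrow> 's \<Rightarrow> 's \<Rightarrow> real" where
  "occ N p0 p1 \<beta> u a i j = (\<Sum>t. \<beta> ^ t * sa_prob N p0 p1 u i t j a)"

text \<open>b^u_i = E^u_i[sum_t theta^1_{X(t)} a(t) beta^t].\<close>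
definition act_meas :: "'s set \<Rightarrow> ('s \<Rightarrow> 's \<Rightarrow> real) \<Rightarrow> ('s \<Rightarrow> 's \<Rightarrow> real) \<Rightarrow> real
              \<Rightarrow> ('s \<Rightarrow> real) \<Rightarrow> ('s \<Rightarrow> real) \<Rightarrow> 's \<Rightarrow> real" where
  "act_meas N p0 p1 \<beta> \<theta> u i =
     (\<Sum>t. \<beta> ^ t * (\<Sum>j\<in>N. \<theta> j * sa_prob N p0 p1 u i t j 1))"

definition S_policy :: "'s set \<Rightarrow> 's set \<Rightarrow> 's \<Rightarrow> real" where
  "S_policy N1 S j = (if j \<in> S \<union> N1 then 1 else 0)"

definition workload :: "'s set \<Rightarrow> 's set \<Rightarrow> ('s \<Rightarrow> 's \<Rightarrow> real) \<Rightarrow> ('s \<Rightarrow> 's \<Rightarrow> real) \<Rightarrow> real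
              \<Rightarrow> ('s \<Rightarrow> real) \<Rightarrow> 's set \<Rightarrow> 's \<Rightarrow> real" where
  "workload N01 N1 p0 p1 \<beta> \<theta> S i =
     \<theta> i * (if i \<in> N01 then 1 else 0)
     + \<beta> * (\<Sum>j\<in>N01 \<union> N1. (p1 i j - p0 i j) * act_meas (N01 \<union> N1) p0 p1 \<beta> \<theta> (S_policy N1 S) j)"

end

theory Submission
  imports Defs
begin

(* For every function g on the states and every policy u, telescoping the discounted sequence
   beta^t E_i[g(X(t))] gives the conservation law
     g_i = sum_k (g_k - beta (P^1 g)_k) x^{1,u}_{ik} + (g_k - beta (P^0 g)_k) x^{0,u}_{ik}.
   Take g = b^S. By the Bellman equation of the S-active policy, the active residual
   g_k - beta (P^1 g)_k equals theta_k on S and N^{1}, the passive residual vanishes off S and N^{1},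
   and on N^{0,1} the two residuals differ by theta_k - w^S_k. Substituting, and using
   b^u_i = sum_k theta_k x^{1,u}_{ik}, gives the identity. *)

lemma summable_discounted_bounded:
  fixes \<beta> :: real
  assumes "0 \<le> \<beta>" "\<beta> < 1" "\<And>t. \<bar>g t\<bar> \<le> C"
  shows "summable (\<lambda>t. \<beta> ^ t * g t)"
proof (rule summable_comparison_test')
  show "summable (\<lambda>t. C * \<beta> ^ t)"
    using assms by (intro summable_mult summable_geometric) auto
  show "norm (\<beta> ^ t * g t) \<le> C * \<beta> ^ t" for t
    using assms mult_right_mono[OF assms(3)[of t], of "\<beta> ^ t"] by (simp add: abs_mult mult.commute)
qed

lemma discounted_telescope_sums:
  fixes \<beta> :: real
  assumes "0 \<le> \<beta>" "\<beta> < 1" "\<And>t. \<bar>h t\<bar> \<le> C"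
  shows "(\<lambda>t. \<beta> ^ t * h t - \<beta> ^ Suc t * h (Suc t)) sums h 0"
  using telescope_sums'[OF summable_LIMSEQ_zero[OF summable_discounted_bounded[OF assms]]]
  by simp

definition policy_kernel :: "('s \<Rightarrow> 's \<Rightarrow> real) \<Rightarrow> ('s \<Rightarrow> 's \<Rightarrow> real) \<Rightarrow> ('s \<Rightarrow> real)
    \<Rightarrow> 's \<Rightarrow> 's \<Rightarrow> real" where
  "policy_kernel p0 p1 u k j = u k * p1 k j + (1 - u k) * p0 k j"

lemma sdist_Suc:
  "sdist N p0 p1 u i (Suc t) j = (\<Sum>k\<in>N. sdist N p0 p1 u i t k * policy_kernel p0 p1 u k j)"
  by (simp add: policy_kernel_def)

declare sdist.simps(2) [simp del]

definition bellman_residual :: "'s set \<Rightarrow> ('s \<Rightarrow> 's \<Rightarrow> real) \<Rightarrow> real \<Rightarrow> ('s \<Rightarrow> real) \<Rightarrow> 's \<Rightarrow> real"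
  where "bellman_residual N p \<beta> g k = g k - \<beta> * (\<Sum>j\<in>N. p k j * g j)"

lemma sdist_residual_step:
  "(\<Sum>k\<in>N. sdist N p0 p1 v i t k * g k) - \<beta> * (\<Sum>k\<in>N. sdist N p0 p1 v i (Suc t) k * g k)
   = (\<Sum>k\<in>N. bellman_residual N p1 \<beta> g k * sa_prob N p0 p1 v i t k 1
              + bellman_residual N p0 \<beta> g k * sa_prob N p0 p1 v i t k 0)"
proof -
  define A1 where "A1 k = (\<Sum>j\<in>N. p1 k j * g j)" for k
  define A0 where "A0 k = (\<Sum>j\<in>N. p0 k j * g j)" for k
  have expected_step: "(\<Sum>j\<in>N. policy_kernel p0 p1 v k j * g j) = v k * A1 k + (1 - v k) * A0 k" for k
  proof -
    have "(\<Sum>j\<in>N. policy_kernel p0 p1 v k j * g j)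
        = (\<Sum>j\<in>N. v k * (p1 k j * g j) + (1 - v k) * (p0 k j * g j))"
      by (simp add: policy_kernel_def algebra_simps)
    then show ?thesis by (simp only: sum.distrib sum_distrib_left A1_def A0_def)
  qed
  have "(\<Sum>k\<in>N. sdist N p0 p1 v i (Suc t) k * g k)
      = (\<Sum>k\<in>N. sdist N p0 p1 v i t k * (v k * A1 k + (1 - v k) * A0 k))"
    unfolding expected_step[symmetric] sdist_Suc
    by (simp add: sum_distrib_left sum_distrib_right mult.assoc) (rule sum.swap)
  then show ?thesis
    unfolding bellman_residual_def A1_def[symmetric] A0_def[symmetric]
    by (simp add: sa_prob_def sum_distrib_left sum_subtractf[symmetric] algebra_simps)
qed

locale two_action_mdp =
  fixes N :: "'s set" and p0 p1 :: "'s \<Rightarrow> 's \<Rightarrow> real"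
  assumes finite: "finite N"
    and p0_nonneg: "\<And>k j. k \<in> N \<Longrightarrow> j \<in> N \<Longrightarrow> p0 k j \<ge> 0"
    and p1_nonneg: "\<And>k j. k \<in> N \<Longrightarrow> j \<in> N \<Longrightarrow> p1 k j \<ge> 0"
    and p0_stoch: "\<And>k. k \<in> N \<Longrightarrow> (\<Sum>j\<in>N. p0 k j) = 1"
    and p1_stoch: "\<And>k. k \<in> N \<Longrightarrow> (\<Sum>j\<in>N. p1 k j) = 1"
begin

lemma sdist_Suc_left:
  assumes "i \<in> N" "j \<in> N"
  shows "sdist N p0 p1 u i (Suc t) j = (\<Sum>k\<in>N. policy_kernel p0 p1 u i k * sdist N p0 p1 u k t j)"
  using assms(2)
proof (induction t arbitrary: j)
  case 0
  then show ?case
    using finite assms(1) by (simp add: sdist_Suc if_distrib[of "\<lambda>x. x * _"] if_distrib[of "\<lambda>x. _ * x"] cong: if_cong)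
next
  case (Suc t)
  let ?P = "policy_kernel p0 p1 u" and ?d = "sdist N p0 p1 u"
  have "?d i (Suc (Suc t)) j = (\<Sum>k\<in>N. (\<Sum>m\<in>N. ?P i m * ?d m t k) * ?P k j)"
    using Suc.IH by (simp add: sdist_Suc)
  also have "\<dots> = (\<Sum>m\<in>N. ?P i m * (\<Sum>k\<in>N. ?d m t k * ?P k j))"
    by (simp add: sum_distrib_left sum_distrib_right mult.assoc) (rule sum.swap)
  finally show ?case by (simp add: sdist_Suc)
qed

lemma sa_prob_Suc_left:
  assumes "i \<in> N" "j \<in> N"
  shows "sa_prob N p0 p1 u i (Suc t) j a
    = (\<Sum>k\<in>N. policy_kernel p0 p1 u i k * sa_prob N p0 p1 u k t j a)"
  using sdist_Suc_left[OF assms] by (simp add: sa_prob_def sum_distrib_right mult.assoc)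

context
  fixes v :: "'s \<Rightarrow> real"
  assumes v_range: "\<And>j. j \<in> N \<Longrightarrow> 0 \<le> v j \<and> v j \<le> 1"
begin

lemma sdist_nonneg: "i \<in> N \<Longrightarrow> j \<in> N \<Longrightarrow> 0 \<le> sdist N p0 p1 v i t j"
proof (induction t arbitrary: j)
  case (Suc t)
  then show ?case
    using v_range p0_nonneg p1_nonneg
    by (auto simp: sdist_Suc policy_kernel_def intro!: sum_nonneg mult_nonneg_nonneg add_nonneg_nonneg)
qed simp

lemma sum_sdist: "i \<in> N \<Longrightarrow> (\<Sum>j\<in>N. sdist N p0 p1 v i t j) = 1"
proof (induction t)
  case (Suc t)
  have row: "(\<Sum>j\<in>N. policy_kernel p0 p1 v k j) = 1" if "k \<in> N" for k
    using p0_stoch[OF that] p1_stoch[OF that]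
    by (simp add: policy_kernel_def sum.distrib sum_distrib_left[symmetric])
  have "(\<Sum>j\<in>N. sdist N p0 p1 v i (Suc t) j)
      = (\<Sum>k\<in>N. sdist N p0 p1 v i t k * (\<Sum>j\<in>N. policy_kernel p0 p1 v k j))"
    by (simp add: sdist_Suc sum_distrib_left) (rule sum.swap)
  then show ?case
    using Suc row by simp
qed (use finite in simp)

lemma sdist_le_1: "i \<in> N \<Longrightarrow> j \<in> N \<Longrightarrow> sdist N p0 p1 v i t j \<le> 1"
  using member_le_sum[OF _ _ finite, of j "sdist N p0 p1 v i t"] sdist_nonneg sum_sdist by auto

lemma abs_sa_prob_le_1: "i \<in> N \<Longrightarrow> j \<in> N \<Longrightarrow> \<bar>sa_prob N p0 p1 v i t j a\<bar> \<le> 1"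
  using sdist_nonneg sdist_le_1 v_range
  by (auto simp: sa_prob_def abs_mult intro!: mult_le_one)

lemma summable_occ:
  fixes \<beta> :: real
  assumes "0 \<le> \<beta>" "\<beta> < 1" "i \<in> N" "j \<in> N"
  shows "summable (\<lambda>t. \<beta> ^ t * sa_prob N p0 p1 v i t j a)"
  using assms abs_sa_prob_le_1 by (intro summable_discounted_bounded[where C=1]) auto

lemma act_meas_eq_occ:
  fixes \<beta> :: real
  assumes "0 \<le> \<beta>" "\<beta> < 1" "i \<in> N"
  shows "act_meas N p0 p1 \<beta> \<theta> v i = (\<Sum>j\<in>N. \<theta> j * occ N p0 p1 \<beta> v 1 i j)"
proof -
  have "act_meas N p0 p1 \<beta> \<theta> v i = (\<Sum>t. \<Sum>j\<in>N. \<theta> j * (\<beta> ^ t * sa_prob N p0 p1 v i t j 1))"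
    by (simp add: act_meas_def sum_distrib_left algebra_simps)
  also have "\<dots> = (\<Sum>j\<in>N. \<theta> j * occ N p0 p1 \<beta> v 1 i j)"
    using assms summable_occ
    by (subst suminf_sum) (auto simp: occ_def intro!: sum.cong suminf_mult summable_mult)
  finally show ?thesis .
qed

lemma occ_first_step:
  fixes \<beta> :: real
  assumes "0 \<le> \<beta>" "\<beta> < 1" "i \<in> N" "j \<in> N"
  shows "occ N p0 p1 \<beta> v a i j
    = sa_prob N p0 p1 v i 0 j a + \<beta> * (\<Sum>k\<in>N. policy_kernel p0 p1 v i k * occ N p0 p1 \<beta> v a k j)"
proof -
  let ?x = "\<lambda>k t. \<beta> ^ t * sa_prob N p0 p1 v k t j a"
  have summable: "summable (?x k)" if "k \<in> N" for k
    using summable_occ assms that by blast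
  have "occ N p0 p1 \<beta> v a i j = ?x i 0 + (\<Sum>t. ?x i (Suc t))"
    using suminf_split_head[OF summable[OF assms(3)]] by (simp add: occ_def)
  also have "(\<Sum>t. ?x i (Suc t)) = (\<Sum>t. \<beta> * (\<Sum>k\<in>N. policy_kernel p0 p1 v i k * ?x k t))"
    using finite assms by (simp add: sa_prob_Suc_left sum_distrib_left algebra_simps)
  also have "\<dots> = \<beta> * (\<Sum>k\<in>N. \<Sum>t. policy_kernel p0 p1 v i k * ?x k t)"
    using summable by (simp add: suminf_mult summable_sum summable_mult suminf_sum)
  also have "\<dots> = \<beta> * (\<Sum>k\<in>N. policy_kernel p0 p1 v i k * occ N p0 p1 \<beta> v a k j)"
    using summable by (simp add: suminf_mult occ_def)
  finally show ?thesis by simp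
qed

lemma act_meas_bellman:
  fixes \<beta> :: real
  assumes "0 \<le> \<beta>" "\<beta> < 1" "i \<in> N"
  shows "act_meas N p0 p1 \<beta> \<theta> v i
    = \<theta> i * v i + \<beta> * (\<Sum>k\<in>N. policy_kernel p0 p1 v i k * act_meas N p0 p1 \<beta> \<theta> v k)"
proof -
  let ?P = "policy_kernel p0 p1 v i" and ?x = "occ N p0 p1 \<beta> v 1"
  have "act_meas N p0 p1 \<beta> \<theta> v i
      = (\<Sum>j\<in>N. \<theta> j * sa_prob N p0 p1 v i 0 j 1) + \<beta> * (\<Sum>j\<in>N. \<Sum>k\<in>N. ?P k * (\<theta> j * ?x k j))"
    using assms
    by (simp add: act_meas_eq_occ occ_first_step sum.distrib sum_distrib_left algebra_simps)
  also have "(\<Sum>j\<in>N. \<theta> j * sa_prob N p0 p1 v i 0 j 1) = \<theta> i * v i"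
    using finite assms(3)
    by (simp add: sa_prob_def if_distrib[of "\<lambda>x. x * _"] if_distrib[of "\<lambda>x. _ * x"] cong: if_cong)
  also have "(\<Sum>j\<in>N. \<Sum>k\<in>N. ?P k * (\<theta> j * ?x k j)) = (\<Sum>k\<in>N. ?P k * act_meas N p0 p1 \<beta> \<theta> v k)"
    using assms by (subst sum.swap) (simp add: act_meas_eq_occ sum_distrib_left)
  finally show ?thesis .
qed

lemma occ_residual_decomposition:
  fixes \<beta> :: real and g :: "'s \<Rightarrow> real"
  assumes "0 \<le> \<beta>" "\<beta> < 1" "i \<in> N"
  shows "g i = (\<Sum>k\<in>N. bellman_residual N p1 \<beta> g k * occ N p0 p1 \<beta> v 1 i k
                        + bellman_residual N p0 \<beta> g k * occ N p0 p1 \<beta> v 0 i k)"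
proof -
  let ?d = "sdist N p0 p1 v i" and ?sa = "sa_prob N p0 p1 v i"
  let ?r1 = "bellman_residual N p1 \<beta> g" and ?r0 = "bellman_residual N p0 \<beta> g"
  define D where "D t = (\<Sum>k\<in>N. ?d t k * g k)" for t
  have D_bounded: "\<bar>D t\<bar> \<le> (\<Sum>k\<in>N. \<bar>g k\<bar>)" for t
    unfolding D_def using sdist_nonneg[OF assms(3)] sdist_le_1[OF assms(3)]
    by (intro order.trans[OF sum_abs] sum_mono) (auto simp: abs_mult intro!: mult_left_le_one_le)
  have "\<beta> ^ t * D t - \<beta> ^ Suc t * D (Suc t)
      = (\<Sum>k\<in>N. ?r1 k * (\<beta> ^ t * ?sa t k 1) + ?r0 k * (\<beta> ^ t * ?sa t k 0))" for t
    using sdist_residual_step[of N p0 p1 v i t g \<beta>]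
    by (simp add: D_def sum_distrib_left right_diff_distrib[symmetric] algebra_simps)
  moreover have "D 0 = g i"
    using finite assms(3) by (simp add: D_def if_distrib[of "\<lambda>x. x * _"] cong: if_cong)
  ultimately have "(\<lambda>t. \<Sum>k\<in>N. ?r1 k * (\<beta> ^ t * ?sa t k 1) + ?r0 k * (\<beta> ^ t * ?sa t k 0)) sums g i"
    using discounted_telescope_sums[of \<beta> D, OF assms(1,2) D_bounded] by simp
  then have "g i = (\<Sum>t. \<Sum>k\<in>N. ?r1 k * (\<beta> ^ t * ?sa t k 1) + ?r0 k * (\<beta> ^ t * ?sa t k 0))"
    by (simp add: sums_iff)
  also have "\<dots> = (\<Sum>k\<in>N. \<Sum>t. ?r1 k * (\<beta> ^ t * ?sa t k 1) + ?r0 k * (\<beta> ^ t * ?sa t k 0))"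
    using summable_occ assms by (intro suminf_sum summable_add summable_mult) auto
  also have "\<dots> = (\<Sum>k\<in>N. ?r1 k * occ N p0 p1 \<beta> v 1 i k + ?r0 k * occ N p0 p1 \<beta> v 0 i k)"
    using summable_occ assms
    by (intro sum.cong refl) (simp add: occ_def suminf_add[symmetric] suminf_mult summable_mult)
  finally show ?thesis .
qed

end

lemma S_policy_range: "0 \<le> S_policy N1 S j \<and> S_policy N1 S j \<le> 1"
  by (simp add: S_policy_def)

lemma bellman_residual_S_policy_active:
  fixes \<beta> :: real
  assumes "0 \<le> \<beta>" "\<beta> < 1" "k \<in> N" "k \<in> S \<union> N1"
  shows "bellman_residual N p1 \<beta> (act_meas N p0 p1 \<beta> \<theta> (S_policy N1 S)) k = \<theta> k"
  using act_meas_bellman[where v = "S_policy N1 S", OF S_policy_range assms(1-3)] assms(4)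
  by (simp add: bellman_residual_def S_policy_def policy_kernel_def)

lemma bellman_residual_S_policy_passive:
  fixes \<beta> :: real
  assumes "0 \<le> \<beta>" "\<beta> < 1" "k \<in> N" "k \<notin> S \<union> N1"
  shows "bellman_residual N p0 \<beta> (act_meas N p0 p1 \<beta> \<theta> (S_policy N1 S)) k = 0"
  using act_meas_bellman[where v = "S_policy N1 S", OF S_policy_range assms(1-3)] assms(4)
  by (simp add: bellman_residual_def S_policy_def policy_kernel_def)

end

lemma workload_eq_bellman_residuals:
  fixes N01 N1 S :: "'s set" and p0 p1 :: "'s \<Rightarrow> 's \<Rightarrow> real" and \<beta> :: real and \<theta> :: "'s \<Rightarrow> real"
  assumes "k \<in> N01"
  defines "b \<equiv> act_meas (N01 \<union> N1) p0 p1 \<beta> \<theta> (S_policy N1 S)"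
  shows "workload N01 N1 p0 p1 \<beta> \<theta> S k
    = \<theta> k + bellman_residual (N01 \<union> N1) p0 \<beta> b k - bellman_residual (N01 \<union> N1) p1 \<beta> b k"
  using assms by (simp add: workload_def bellman_residual_def sum_subtractf left_diff_distrib right_diff_distrib)

lemma S_policy_residual_term:
  fixes \<beta> y0 y1 :: real and \<theta> :: "'s \<Rightarrow> real"
  assumes "two_action_mdp (N01 \<union> N1) p0 p1" "N01 \<inter> N1 = {}" "S \<subseteq> N01" "0 \<le> \<beta>" "\<beta> < 1"
    and "k \<in> N01 \<union> N1" "k \<in> N1 \<Longrightarrow> y0 = 0"
  defines "b \<equiv> act_meas (N01 \<union> N1) p0 p1 \<beta> \<theta> (S_policy N1 S)"
    and "w \<equiv> workload N01 N1 p0 p1 \<beta> \<theta> S"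
  shows "bellman_residual (N01 \<union> N1) p1 \<beta> b k * y1 + bellman_residual (N01 \<union> N1) p0 \<beta> b k * y0
    = \<theta> k * y1 + (if k \<in> S then w k * y0 else 0) - (if k \<in> N01 - S then w k * y1 else 0)"
proof -
  interpret two_action_mdp "N01 \<union> N1" p0 p1 by fact
  let ?r1 = "bellman_residual (N01 \<union> N1) p1 \<beta> b" and ?r0 = "bellman_residual (N01 \<union> N1) p0 \<beta> b"
  have active_residual: "?r1 k = \<theta> k" if "k \<in> S \<union> N1"
    unfolding b_def using assms(4-6) that by (intro bellman_residual_S_policy_active)
  have workload: "w k = \<theta> k + ?r0 k - ?r1 k" if "k \<in> N01"
    using workload_eq_bellman_residuals[OF that] by (simp add: w_def b_def)
  consider "k \<in> S" | "k \<in> N1" | "k \<in> N01 - S"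
    using assms(6) by blast
  then show ?thesis
  proof cases
    case 1
    then show ?thesis using assms(3) active_residual workload by auto
  next
    case 2
    then show ?thesis using assms(2,7) active_residual by auto
  next
    case 3
    have passive_residual: "?r0 k = 0"
      unfolding b_def using assms(2,4-6) 3 by (intro bellman_residual_S_policy_passive) auto
    then have "?r1 k = \<theta> k - w k"
      using 3 workload by simp
    then show ?thesis
      using 3 passive_residual by (simp add: left_diff_distrib)
  qed
qed

lemma sum_if_mem_subset:
  "finite A \<Longrightarrow> B \<subseteq> A \<Longrightarrow> (\<Sum>k\<in>A. if k \<in> B then f k else 0) = sum f B"
  by (intro sum.mono_neutral_cong_right) auto

theorem proposition4:
  fixes N01 N1 :: "'s set" and p0 p1 :: "'s \<Rightarrow> 's \<Rightarrow> real" and \<beta> :: real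
    and \<theta> :: "'s \<Rightarrow> real" and u :: "'s \<Rightarrow> real" and S :: "'s set" and i :: 's
  assumes fin: "finite (N01 \<union> N1)"
    and disj: "N01 \<inter> N1 = {}"
    and p0_nonneg: "\<And>k j. k \<in> N01 \<union> N1 \<Longrightarrow> j \<in> N01 \<union> N1 \<Longrightarrow> p0 k j \<ge> 0"
    and p1_nonneg: "\<And>k j. k \<in> N01 \<union> N1 \<Longrightarrow> j \<in> N01 \<union> N1 \<Longrightarrow> p1 k j \<ge> 0"
    and p0_stoch: "\<And>k. k \<in> N01 \<union> N1 \<Longrightarrow> (\<Sum>j\<in>N01 \<union> N1. p0 k j) = 1"
    and p1_stoch: "\<And>k. k \<in> N01 \<union> N1 \<Longrightarrow> (\<Sum>j\<in>N01 \<union> N1. p1 k j) = 1"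
    and p_N1: "\<And>k j. k \<in> N1 \<Longrightarrow> j \<in> N01 \<union> N1 \<Longrightarrow> p1 k j = p0 k j"
    and beta: "0 < \<beta>" "\<beta> < 1"
    and theta_pos: "\<And>j. j \<in> N01 \<union> N1 \<Longrightarrow> \<theta> j > 0"
    and u_range: "\<And>j. j \<in> N01 \<union> N1 \<Longrightarrow> 0 \<le> u j \<and> u j \<le> 1"
    and u_N1: "\<And>j. j \<in> N1 \<Longrightarrow> u j = 1"
    and S_sub: "S \<subseteq> N01"
    and i_in: "i \<in> N01 \<union> N1"
  shows "act_meas (N01 \<union> N1) p0 p1 \<beta> \<theta> u i
           + (\<Sum>j\<in>S. workload N01 N1 p0 p1 \<beta> \<theta> S j * occ (N01 \<union> N1) p0 p1 \<beta> u 0 i j)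
         = act_meas (N01 \<union> N1) p0 p1 \<beta> \<theta> (S_policy N1 S) i
           + (\<Sum>j\<in>N01 - S. workload N01 N1 p0 p1 \<beta> \<theta> S j * occ (N01 \<union> N1) p0 p1 \<beta> u 1 i j)"
proof -
  let ?N = "N01 \<union> N1"
  let ?x = "\<lambda>a. occ ?N p0 p1 \<beta> u a i"
  let ?b = "act_meas ?N p0 p1 \<beta> \<theta> (S_policy N1 S)" and ?w = "workload N01 N1 p0 p1 \<beta> \<theta> S"
  have mdp: "two_action_mdp ?N p0 p1"
    using fin p0_nonneg p1_nonneg p0_stoch p1_stoch by unfold_locales
  have passive_N1: "?x 0 k = 0" if "k \<in> N1" for k
    using that by (simp add: occ_def sa_prob_def u_N1)
  have "?b i = (\<Sum>k\<in>?N. bellman_residual ?N p1 \<beta> ?b k * ?x 1 k + bellman_residual ?N p0 \<beta> ?b k * ?x 0 k)"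
    using two_action_mdp.occ_residual_decomposition[OF mdp] u_range beta i_in by simp
  also have "\<dots> = (\<Sum>k\<in>?N. \<theta> k * ?x 1 k + (if k \<in> S then ?w k * ?x 0 k else 0)
                                  - (if k \<in> N01 - S then ?w k * ?x 1 k else 0))"
    using S_policy_residual_term[OF mdp disj S_sub] beta passive_N1 by (intro sum.cong) auto
  also have "\<dots> = (\<Sum>k\<in>?N. \<theta> k * ?x 1 k) + (\<Sum>k\<in>S. ?w k * ?x 0 k) - (\<Sum>k\<in>N01 - S. ?w k * ?x 1 k)"
    using S_sub
    by (simp only: sum.distrib sum_subtractf sum_if_mem_subset[OF fin] le_supI1 Diff_subset)
  also have "(\<Sum>k\<in>?N. \<theta> k * ?x 1 k) = act_meas ?N p0 p1 \<beta> \<theta> u i"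
    using two_action_mdp.act_meas_eq_occ[OF mdp] u_range beta i_in by simp
  finally show ?thesis
    by simp
qed

end
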